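(* Let $R$ be a ring which is $2$-primal, local, and strongly weakly nil-clean. Then the $2\times 2$ matrix ring ${\rm M}_2(R)$ is a GSWNC ring.
   Context: All rings are associative with identity. An element $a$ of a ring $S$ is called strongly weakly nil-clean if there exist an idempotent $e \in S$ and a nilpotent $q \in S$ with $eq = qe$ such that $a = q + e$ or $a = q - e$. A ring is strongly weakly nil-clean if all its elements are strongly weakly nil-clean. A ring $S$ is called GSWNC if every non-invertible element of $S$ is strongly weakly nil-clean. A ring is $2$-primal if its prime radical (the intersection of all prime ideals) equals its set of nilpotent elements. *)

theory Defs
  imports Main
begin

definition idempotent :: "'a::ring_1 \<Rightarrow> bool" where
  "idempotent e \<longleftrightarrow> e * e = e"

definition nilpotent :: "'a::ring_1 \<Rightarrow> bool" where
  "nilpotent q \<longleftrightarrow> (\<exists>n::nat. q ^ n = 0)"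

definition invertible :: "'a::ring_1 \<Rightarrow> bool" where
  "invertible a \<longleftrightarrow> (\<exists>b. a * b = 1 \<and> b * a = 1)"

definition swnc_elem :: "'a::ring_1 \<Rightarrow> bool" where
  "swnc_elem a \<longleftrightarrow> (\<exists>e q. idempotent e \<and> nilpotent q \<and> e * q = q * e \<and>
                               (a = q + e \<or> a = q - e))"

definition swnc_ring :: "'a::ring_1 itself \<Rightarrow> bool" where
  "swnc_ring _ \<longleftrightarrow> (\<forall>a::'a. swnc_elem a)"

definition gswnc_ring :: "'a::ring_1 itself \<Rightarrow> bool" where
  "gswnc_ring _ \<longleftrightarrow> (\<forall>a::'a. \<not> invertible a \<longrightarrow> swnc_elem a)"

definition two_sided_ideal :: "'a::ring_1 set \<Rightarrow> bool" where
  "two_sided_ideal I \<longleftrightarrow> 0 \<in> I \<and> (\<forall>x\<in>I. \<forall>y\<in>I. x + y \<in> I) \<and> (\<forall>x\<in>I. - x \<in> I) \<and>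
     (\<forall>x\<in>I. \<forall>r. r * x \<in> I \<and> x * r \<in> I)"

definition prime_ideal :: "'a::ring_1 set \<Rightarrow> bool" where
  "prime_ideal P \<longleftrightarrow> two_sided_ideal P \<and> P \<noteq> UNIV \<and>
     (\<forall>A B. two_sided_ideal A \<and> two_sided_ideal B \<and> (\<forall>a\<in>A. \<forall>b\<in>B. a * b \<in> P)
            \<longrightarrow> A \<subseteq> P \<or> B \<subseteq> P)"

definition prime_radical :: "'a::ring_1 itself \<Rightarrow> 'a set" where
  "prime_radical _ = \<Inter> {P. prime_ideal P}"

definition two_primal :: "'a::ring_1 itself \<Rightarrow> bool" where
  "two_primal T \<longleftrightarrow> prime_radical T = {q. nilpotent q}"

definition local_ring :: "'a::ring_1 itself \<Rightarrow> bool" where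
  "local_ring _ \<longleftrightarrow> (0::'a) \<noteq> 1 \<and> two_sided_ideal {a::'a. \<not> invertible a}"

datatype 'a m2 = M2 (e11: 'a) (e12: 'a) (e21: 'a) (e22: 'a)

instantiation m2 :: (ring_1) ring_1
begin

definition "0 = M2 0 0 0 0"
definition "1 = M2 1 0 0 1"
definition "A + B = M2 (e11 A + e11 B) (e12 A + e12 B) (e21 A + e21 B) (e22 A + e22 B)"
definition "A - B = M2 (e11 A - e11 B) (e12 A - e12 B) (e21 A - e21 B) (e22 A - e22 B)"
definition "- A = M2 (- e11 A) (- e12 A) (- e21 A) (- e22 A)"
definition "A * B = M2 (e11 A * e11 B + e12 A * e21 B) (e11 A * e12 B + e12 A * e22 B)
                       (e21 A * e11 B + e22 A * e21 B) (e21 A * e12 B + e22 A * e22 B)"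

instance
proof
  fix a b c :: "'a m2"
  show "a * b * c = a * (b * c)"
    by (cases a; cases b; cases c) (simp add: times_m2_def algebra_simps)
  show "a + b + c = a + (b + c)"
    by (simp add: plus_m2_def algebra_simps)
  show "a + b = b + a"
    by (simp add: plus_m2_def algebra_simps)
  show "0 + a = a"
    by (cases a) (simp add: plus_m2_def zero_m2_def)
  show "- a + a = 0"
    by (cases a) (simp add: plus_m2_def uminus_m2_def zero_m2_def)
  show "a - b = a + - b"
    by (simp add: plus_m2_def uminus_m2_def minus_m2_def)
  show "(a + b) * c = a * c + b * c"
    by (simp add: plus_m2_def times_m2_def algebra_simps)
  show "a * (b + c) = a * b + a * c"
    by (simp add: plus_m2_def times_m2_def algebra_simps)
  show "1 * a = a"
    by (cases a) (simp add: one_m2_def times_m2_def)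
  show "a * 1 = a"
    by (cases a) (simp add: one_m2_def times_m2_def)
  show "(0::'a m2) \<noteq> 1"
    by (simp add: zero_m2_def one_m2_def)
qed

end

end

(*
  Over a local ring the only idempotents are 0 and 1, so in a local strongly weakly nil-clean
  ring every element is congruent to -1, 0 or 1 modulo a nilpotent; the nilpotents are then
  exactly the non-units and form an ideal N. By 2-primality N is the prime radical, which is
  locally nilpotent (a maximal ideal modulo which a finite set S is not nilpotent is prime), so
  every 2x2 matrix with entries in N is nilpotent. Hence each matrix A differs from an integer
  matrix A0 by such a nilpotent matrix, and Cayley-Hamilton for A0 governs A modulo M2(N).
  If det A0 lies in N, then A^2 - tA is nilpotent for some t in {-1, 0, 1}, so A is nilpotent
  or the idempotent lifted from A or -A exhibits A as strongly weakly nil-clean. Otherwise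
  (det A0)^2 - 1 lies in N, and det A0 times the adjugate of A0 inverts A modulo M2(N), so A
  is invertible.
*)
theory Submission
  imports Defs "HOL-Library.Set_Algebras"
begin

lemma power_mult_commuting:
  fixes x y :: "'a::monoid_mult"
  assumes "x * y = y * x"
  shows "(x * y) ^ n = x ^ n * y ^ n"
proof (induction n)
  case (Suc n)
  have "(x * y) ^ Suc n = x * (y * x ^ n) * y ^ n"
    using Suc by (simp add: mult.assoc)
  also have "\<dots> = x * (x ^ n * y) * y ^ n"
    using power_commuting_commutes[OF assms, of n] by simp
  also have "\<dots> = x ^ Suc n * y ^ Suc n"
    by (simp add: mult.assoc)
  finally show ?case .
qed simp

lemma nilpotent_mult_commuting:
  fixes x y :: "'a::ring_1"
  assumes "x * y = y * x" and "nilpotent x"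
  shows "nilpotent (x * y)"
  using assms power_mult_commuting[OF assms(1)] unfolding nilpotent_def by (metis mult_zero_left)

lemma nilpotent_uminus: "nilpotent (x::'a::ring_1) \<Longrightarrow> nilpotent (- x)"
  unfolding nilpotent_def by (metis power_minus mult_zero_right)

lemma nilpotent_if_nilpotent_square: "nilpotent ((x::'a::ring_1) * x) \<Longrightarrow> nilpotent x"
  unfolding nilpotent_def by (metis power_mult power2_eq_square)

lemma one_minus_mult_geometric_sum: "(1 - x) * (\<Sum>i<n. x ^ i) = (1::'a::ring_1) - x ^ n"
proof (induction n)
  case (Suc n)
  have "(1 - x) * (\<Sum>i<Suc n. x ^ i) = (1 - x) * (\<Sum>i<n. x ^ i) + (x ^ n - x * x ^ n)"
    by (simp add: algebra_simps)
  with Suc show ?case by simp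
qed simp

lemma invertible_one_minus_nilpotent:
  fixes x :: "'a::ring_1"
  assumes "nilpotent x"
  shows "invertible (1 - x)"
proof -
  obtain n where "x ^ n = 0"
    using assms by (auto simp: nilpotent_def)
  define s where "s = (\<Sum>i<n. x ^ i)"
  have left: "(1 - x) * s = 1"
    using one_minus_mult_geometric_sum[of x n] \<open>x ^ n = 0\<close> by (simp add: s_def)
  have "x * s = s * x"
    by (simp add: s_def sum_distrib_left sum_distrib_right power_commutes)
  then have "s * (1 - x) = (1 - x) * s"
    by (simp add: algebra_simps)
  with left show ?thesis
    unfolding invertible_def by auto
qed

lemma invertible_one_plus_nilpotent:
  "nilpotent (x::'a::ring_1) \<Longrightarrow> invertible (1 + x)"
  using invertible_one_minus_nilpotent[OF nilpotent_uminus] by fastforce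

lemma not_invertible_if_nilpotent:
  fixes x :: "'a::ring_1"
  assumes "(0::'a) \<noteq> 1" and "nilpotent x"
  shows "\<not> invertible x"
proof
  assume "invertible x"
  then obtain y where y: "x * y = 1" "y * x = 1"
    by (auto simp: invertible_def)
  obtain n where "x ^ n = 0"
    using assms(2) by (auto simp: nilpotent_def)
  then have "(x * y) ^ n = 0"
    using power_mult_commuting[of x y n] y by simp
  with y assms(1) show False
    by simp
qed

lemma invertible_uminus: "invertible (x::'a::ring_1) \<Longrightarrow> invertible (- x)"
  unfolding invertible_def by (metis minus_mult_minus)

lemma invertible_if_mult_invertible:
  fixes a b :: "'a::ring_1"
  assumes "invertible (a * b)" and "invertible (b * a)"
  shows "invertible a"
proof -
  obtain u where u: "a * (b * u) = 1"
    using assms(1) by (auto simp: invertible_def mult.assoc)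
  obtain v where v: "(v * b) * a = 1"
    using assms(2) by (auto simp: invertible_def mult.assoc)
  have "v * b = (v * b) * (a * (b * u))"
    using u by simp
  also have "\<dots> = b * u"
    using v by (metis mult.assoc mult_1_left)
  finally show ?thesis
    unfolding invertible_def using u v by metis
qed

definition bicommutant :: "'a::ring_1 \<Rightarrow> 'a set" where
  "bicommutant a = {y. \<forall>z. z * a = a * z \<longrightarrow> z * y = y * z}"

lemma bicommutant_self: "a \<in> bicommutant a"
  and bicommutant_one: "1 \<in> bicommutant a"
  and bicommutant_zero: "0 \<in> bicommutant a"
  by (simp_all add: bicommutant_def)

lemma bicommutant_diff: "y \<in> bicommutant a \<Longrightarrow> z \<in> bicommutant a \<Longrightarrow> y - z \<in> bicommutant a"
  and bicommutant_add: "y \<in> bicommutant a \<Longrightarrow> z \<in> bicommutant a \<Longrightarrow> y + z \<in> bicommutant a"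
  by (simp_all add: bicommutant_def algebra_simps)

lemma bicommutant_mult:
  assumes "y \<in> bicommutant a" and "z \<in> bicommutant a"
  shows "y * z \<in> bicommutant a"
  unfolding bicommutant_def
proof (intro CollectI allI impI)
  fix w assume "w * a = a * w"
  then have "w * y = y * w" "w * z = z * w"
    using assms by (simp_all add: bicommutant_def)
  then show "w * (y * z) = y * z * w"
    by (metis mult.assoc)
qed

lemma bicommutant_commute: "y \<in> bicommutant a \<Longrightarrow> z \<in> bicommutant a \<Longrightarrow> y * z = z * y"
  unfolding bicommutant_def by (metis (mono_tags, lifting) mem_Collect_eq)

lemma bicommutant_power: "y \<in> bicommutant a \<Longrightarrow> y ^ n \<in> bicommutant a"
  by (induction n) (simp_all add: bicommutant_one bicommutant_mult)

lemmas bicommutant_intros =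
  bicommutant_self bicommutant_one bicommutant_zero bicommutant_diff bicommutant_add bicommutant_mult

(* e + (e^2 - e)(1 - 2e) = 3e^2 - 2e^3, the classical map for lifting idempotents *)
definition idempotent_step :: "'a::ring_1 \<Rightarrow> 'a" where
  "idempotent_step e = e + (e * e - e) * (1 - e - e)"

(* 4 is written as 1 + 1 + 1 + 1: simp cannot commute numerals past variables in a ring_1 *)
lemma idempotent_step_defect:
  "idempotent_step e * idempotent_step e - idempotent_step e =
     (e * e - e) * (e * e - e) * ((1 - e - e) * (1 - e - e) - 1 - 1 - 1 - 1)"
  unfolding idempotent_step_def by (simp add: algebra_simps)

primrec idempotent_iterate :: "'a::ring_1 \<Rightarrow> nat \<Rightarrow> 'a" where
  "idempotent_iterate a 0 = a"
| "idempotent_iterate a (Suc k) = idempotent_step (idempotent_iterate a k)"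

lemma idempotent_iterate_bicommutant: "idempotent_iterate a k \<in> bicommutant a"
  by (induction k) (simp_all add: idempotent_step_def bicommutant_intros)

lemma idempotent_iterate_defect:
  fixes a :: "'a::ring_1"
  defines "x \<equiv> a * a - a"
  shows "\<exists>r\<in>bicommutant a.
    idempotent_iterate a k * idempotent_iterate a k - idempotent_iterate a k = x ^ 2 ^ k * r"
proof (induction k)
  case 0
  show ?case
    using bicommutant_one by (force simp: x_def)
next
  case (Suc k)
  let ?e = "idempotent_iterate a k"
  obtain r where r: "r \<in> bicommutant a" "?e * ?e - ?e = x ^ 2 ^ k * r"
    using Suc by blast
  define w where "w = (1 - ?e - ?e) * (1 - ?e - ?e) - 1 - 1 - 1 - 1"
  have "r * x ^ 2 ^ k = x ^ 2 ^ k * r"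
    using power_commuting_commutes[OF bicommutant_commute[OF _ r(1)]]
    by (simp add: x_def bicommutant_intros)
  then have "x ^ 2 ^ k * r * (x ^ 2 ^ k * r) = x ^ 2 ^ k * x ^ 2 ^ k * (r * r)"
    by (simp add: mult.assoc flip: mult.assoc[of r])
  also have "x ^ 2 ^ k * x ^ 2 ^ k = x ^ 2 ^ Suc k"
    by (simp flip: power_add mult_2)
  finally have "idempotent_iterate a (Suc k) * idempotent_iterate a (Suc k) - idempotent_iterate a (Suc k)
      = x ^ 2 ^ Suc k * (r * r * w)"
    using idempotent_step_defect[of ?e] r(2) by (simp add: w_def mult.assoc)
  moreover have "r * r * w \<in> bicommutant a"
    unfolding w_def by (intro bicommutant_intros r(1) idempotent_iterate_bicommutant)
  ultimately show ?case
    by blast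
qed

lemma idempotent_iterate_diff:
  fixes a :: "'a::ring_1"
  defines "x \<equiv> a * a - a"
  shows "\<exists>p\<in>bicommutant a. idempotent_iterate a k - a = x * p"
proof (induction k)
  case 0
  show ?case
    using bicommutant_zero by force
next
  case (Suc k)
  let ?e = "idempotent_iterate a k"
  obtain p where p: "p \<in> bicommutant a" "?e - a = x * p"
    using Suc by blast
  obtain r where r: "r \<in> bicommutant a" "?e * ?e - ?e = x ^ 2 ^ k * r"
    using idempotent_iterate_defect[of a k] by (auto simp: x_def)
  have "x ^ 2 ^ k = x * x ^ (2 ^ k - 1)"
    by (simp flip: power_Suc)
  then have "idempotent_iterate a (Suc k) - a = x * (x ^ (2 ^ k - 1) * r * (1 - ?e - ?e) + p)"
    using r(2) p(2) by (simp add: idempotent_step_def distrib_left mult.assoc)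
  moreover have "x ^ (2 ^ k - 1) * r * (1 - ?e - ?e) + p \<in> bicommutant a"
    unfolding x_def
    by (intro bicommutant_intros bicommutant_power r(1) p(1) idempotent_iterate_bicommutant)
  ultimately show ?case
    by blast
qed

lemma idempotent_lift:
  fixes a :: "'a::ring_1"
  assumes "nilpotent (a * a - a)"
  shows "\<exists>e. idempotent e \<and> nilpotent (a - e) \<and> e * a = a * e"
proof -
  define x where "x = a * a - a"
  obtain n where "x ^ n = 0"
    using assms by (auto simp: nilpotent_def x_def)
  let ?e = "idempotent_iterate a n"
  obtain r p where r: "?e * ?e - ?e = x ^ 2 ^ n * r"
    and p: "p \<in> bicommutant a" "?e - a = x * p"
    using idempotent_iterate_defect idempotent_iterate_diff unfolding x_def by blast
  have "x ^ 2 ^ n = x ^ n * x ^ (2 ^ n - n)"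
    using less_exp[of n] by (simp flip: power_add)
  with r \<open>x ^ n = 0\<close> have "idempotent ?e"
    by (simp add: idempotent_def)
  moreover have "x \<in> bicommutant a"
    unfolding x_def by (intro bicommutant_intros)
  then have "nilpotent (?e - a)"
    unfolding p(2) using \<open>x ^ n = 0\<close>
    by (intro nilpotent_mult_commuting bicommutant_commute p(1)) (auto simp: nilpotent_def p(1))
  then have "nilpotent (a - ?e)"
    using nilpotent_uminus by fastforce
  moreover have "?e * a = a * ?e"
    using bicommutant_commute[OF idempotent_iterate_bicommutant bicommutant_self] .
  ultimately show ?thesis
    by blast
qed

lemma ideal_zero: "two_sided_ideal I \<Longrightarrow> 0 \<in> I"
  and ideal_add: "two_sided_ideal I \<Longrightarrow> x \<in> I \<Longrightarrow> y \<in> I \<Longrightarrow> x + y \<in> I"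
  and ideal_uminus: "two_sided_ideal I \<Longrightarrow> x \<in> I \<Longrightarrow> - x \<in> I"
  and ideal_mult_left: "two_sided_ideal I \<Longrightarrow> x \<in> I \<Longrightarrow> r * x \<in> I"
  and ideal_mult_right: "two_sided_ideal I \<Longrightarrow> x \<in> I \<Longrightarrow> x * r \<in> I"
  by (simp_all add: two_sided_ideal_def)

lemma ideal_diff: "two_sided_ideal I \<Longrightarrow> x \<in> I \<Longrightarrow> y \<in> I \<Longrightarrow> x - y \<in> I"
  unfolding diff_conv_add_uminus by (intro ideal_add ideal_uminus)

lemma ideal_diff_mult:
  assumes "two_sided_ideal I" "a - b \<in> I" "c - d \<in> I"
  shows "a * c - b * d \<in> I"
proof -
  have "a * c - b * d = (a - b) * c + b * (c - d)"
    by (simp add: algebra_simps)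
  with assms show ?thesis
    by (simp add: ideal_add ideal_mult_left ideal_mult_right)
qed

lemma local_ring_idempotent_cases:
  fixes e :: "'a::ring_1"
  assumes "local_ring TYPE('a)" and "idempotent e"
  shows "e = 0 \<or> e = 1"
proof -
  have ee: "e * e = e"
    using assms(2) by (simp add: idempotent_def)
  consider "invertible e" | "invertible (1 - e)" | "\<not> invertible e" "\<not> invertible (1 - e)"
    by blast
  then show ?thesis
  proof cases
    case 1
    then obtain b where "e * b = 1"
      by (auto simp: invertible_def)
    then have "e = (e * e) * b"
      by (simp add: mult.assoc)
    with ee \<open>e * b = 1\<close> show ?thesis
      by simp
  next
    case 2
    then obtain b where "b * (1 - e) = 1"
      by (auto simp: invertible_def)
    then have "e = b * (1 - e) * e"
      by simp
    also have "\<dots> = b * (e - e * e)"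
      by (simp add: mult.assoc left_diff_distrib)
    finally show ?thesis
      using ee by simp
  next
    case 3
    then have "e + (1 - e) \<in> {a::'a. \<not> invertible a}"
      using assms(1) ideal_add unfolding local_ring_def by blast
    then show ?thesis
      by (simp add: invertible_def)
  qed
qed

lemma swnc_local_residue:
  fixes x :: "'a::ring_1"
  assumes "local_ring TYPE('a)" and "swnc_ring TYPE('a)"
  obtains k :: int where "k \<in> {-1, 0, 1}" and "nilpotent (x - of_int k)"
proof -
  obtain e q where "idempotent e" "nilpotent q" and x: "x = q + e \<or> x = q - e"
    using assms(2) unfolding swnc_ring_def swnc_elem_def by blast
  with local_ring_idempotent_cases[OF assms(1)] have "e = 0 \<or> e = 1"
    by blast
  with x have "nilpotent (x - of_int 0) \<or> nilpotent (x - of_int 1) \<or> nilpotent (x - of_int (-1))"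
    using \<open>nilpotent q\<close> by auto
  with that show ?thesis
    by blast
qed

lemma swnc_local_nilpotent_iff:
  fixes x :: "'a::ring_1"
  assumes "local_ring TYPE('a)" and "swnc_ring TYPE('a)"
  shows "nilpotent x \<longleftrightarrow> \<not> invertible x"
proof
  show "nilpotent x \<Longrightarrow> \<not> invertible x"
    using assms(1) not_invertible_if_nilpotent by (auto simp: local_ring_def)
next
  assume "\<not> invertible x"
  obtain k :: int where "k \<in> {-1, 0, 1}" and k: "nilpotent (x - of_int k)"
    using swnc_local_residue[OF assms] .
  moreover have "k \<noteq> 1"
    using k invertible_one_plus_nilpotent[of "x - 1"] \<open>\<not> invertible x\<close> by auto
  moreover have "k \<noteq> -1"
  proof
    assume "k = -1"
    with k have "invertible (- (1 - (x + 1)))"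
      by (intro invertible_uminus invertible_one_minus_nilpotent) simp
    with \<open>\<not> invertible x\<close> show False
      by simp
  qed
  ultimately show "nilpotent x"
    by auto
qed

lemma swnc_local_nilpotent_ideal:
  assumes "local_ring TYPE('a::ring_1)" and "swnc_ring TYPE('a)"
  shows "two_sided_ideal {x::'a. nilpotent x}"
  using assms swnc_local_nilpotent_iff[OF assms] by (simp add: local_ring_def)

lemma swnc_local_square_minus_one:
  fixes x :: "'a::ring_1"
  assumes "local_ring TYPE('a)" and "swnc_ring TYPE('a)" and "\<not> nilpotent x"
  shows "nilpotent (x * x - 1)"
proof -
  obtain k :: int where "k \<in> {-1, 0, 1}" and k: "nilpotent (x - of_int k)"
    using swnc_local_residue[OF assms(1,2)] .
  with assms(3) have "k = 1 \<or> k = -1"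
    by auto
  then have "x * x - 1 = (x - of_int k) * (x + of_int k)"
    by (auto simp: algebra_simps)
  with k show ?thesis
    using ideal_mult_right[OF swnc_local_nilpotent_ideal[OF assms(1,2)]] by simp
qed

definition nilpotent_modulo :: "'a::ring_1 set \<Rightarrow> 'a set \<Rightarrow> bool" where
  "nilpotent_modulo S I \<longleftrightarrow> (\<exists>n. \<forall>w. length w = n \<and> set w \<subseteq> S \<longrightarrow> prod_list w \<in> I)"

lemma two_sided_ideal_Union_chain:
  assumes "C \<noteq> {}" and "subset.chain {I. two_sided_ideal I} C"
  shows "two_sided_ideal (\<Union>C)"
proof -
  have ideals: "\<And>I. I \<in> C \<Longrightarrow> two_sided_ideal I"
    and linear: "\<And>I K. I \<in> C \<Longrightarrow> K \<in> C \<Longrightarrow> I \<subseteq> K \<or> K \<subseteq> I"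
    using assms(2) by (auto simp: subset.chain_def)
  show ?thesis
    unfolding two_sided_ideal_def
  proof (intro conjI ballI allI)
    show "0 \<in> \<Union>C"
      using assms(1) ideals ideal_zero by blast
  next
    fix x y assume "x \<in> \<Union>C" "y \<in> \<Union>C"
    then obtain I K where "I \<in> C" "K \<in> C" "x \<in> I" "y \<in> K"
      by blast
    with linear[of I K] ideals ideal_add have "x + y \<in> I \<or> x + y \<in> K"
      by blast
    with \<open>I \<in> C\<close> \<open>K \<in> C\<close> show "x + y \<in> \<Union>C"
      by blast
  next
    fix x r assume "x \<in> \<Union>C"
    then obtain I where "I \<in> C" "x \<in> I"
      by blast
    with ideals ideal_uminus ideal_mult_left ideal_mult_right
    show "- x \<in> \<Union>C" "r * x \<in> \<Union>C" "x * r \<in> \<Union>C"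
      by blast+
  qed
qed

lemma not_nilpotent_modulo_Union_chain:
  assumes "finite S" and "C \<noteq> {}" and chain: "subset.chain {I. \<not> nilpotent_modulo S I} C"
  shows "\<not> nilpotent_modulo S (\<Union>C)"
proof
  assume "nilpotent_modulo S (\<Union>C)"
  then obtain n where n: "\<forall>w. length w = n \<and> set w \<subseteq> S \<longrightarrow> prod_list w \<in> \<Union>C"
    by (auto simp: nilpotent_modulo_def)
  let ?W = "prod_list ` {w. set w \<subseteq> S \<and> length w = n}"
  have "finite ?W"
    using finite_lists_length_eq[OF assms(1)] by blast
  moreover have "?W \<subseteq> \<Union>C"
    using n by auto
  ultimately obtain I where "I \<in> C" "?W \<subseteq> I"
    using finite_subset_Union_chain[OF _ _ assms(2) chain] by blast
  then have "nilpotent_modulo S I"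
    unfolding nilpotent_modulo_def by blast
  with \<open>I \<in> C\<close> chain show False
    by (auto simp: subset.chain_def)
qed

lemma two_sided_ideal_set_plus:
  assumes P: "two_sided_ideal P" and A: "two_sided_ideal A"
  shows "two_sided_ideal (P + A)"
  unfolding two_sided_ideal_def
proof (intro conjI ballI allI)
  show "0 \<in> P + A"
    using set_plus_intro[OF ideal_zero[OF P] ideal_zero[OF A]] by simp
next
  fix x y assume "x \<in> P + A" "y \<in> P + A"
  then obtain p a p' a' where "x = p + a" "y = p' + a'" "p \<in> P" "a \<in> A" "p' \<in> P" "a' \<in> A"
    by (auto elim!: set_plus_elim)
  moreover have "(p + p') + (a + a') \<in> P + A"
    using calculation by (intro set_plus_intro) (simp_all add: ideal_add P A)
  ultimately show "x + y \<in> P + A"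
    by (simp add: add_ac)
next
  fix x r assume "x \<in> P + A"
  then obtain p a where x: "x = p + a" "p \<in> P" "a \<in> A"
    by (auto elim!: set_plus_elim)
  have "- x = - p + - a" "r * x = r * p + r * a" "x * r = p * r + a * r"
    using x(1) by (simp_all add: algebra_simps)
  moreover have "- p + - a \<in> P + A" "r * p + r * a \<in> P + A" "p * r + a * r \<in> P + A"
    using x(2,3) by (simp_all only: set_plus_intro ideal_uminus ideal_mult_left ideal_mult_right P A)
  ultimately show "- x \<in> P + A" "r * x \<in> P + A" "x * r \<in> P + A"
    by (simp_all only:)
qed

lemma set_plus_mult_in_ideal:
  assumes P: "two_sided_ideal P" and "x \<in> P + A" "y \<in> P + B" and AB: "\<forall>a\<in>A. \<forall>b\<in>B. a * b \<in> P"
  shows "x * y \<in> P"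
proof -
  obtain p a p' b where "x = p + a" "y = p' + b" "p \<in> P" "a \<in> A" "p' \<in> P" "b \<in> B"
    using assms(2,3) by (auto elim!: set_plus_elim)
  moreover have "(p + a) * (p' + b) = p * (p' + b) + a * p' + a * b"
    by (simp add: algebra_simps)
  ultimately show ?thesis
    using AB by (simp add: ideal_add ideal_mult_left ideal_mult_right P)
qed

lemma nilpotent_modulo_mult:
  assumes "nilpotent_modulo S I" and "nilpotent_modulo S K"
    and IK: "\<And>x y. x \<in> I \<Longrightarrow> y \<in> K \<Longrightarrow> x * y \<in> P"
  shows "nilpotent_modulo S P"
proof -
  obtain m k where m: "\<forall>w. length w = m \<and> set w \<subseteq> S \<longrightarrow> prod_list w \<in> I"
    and k: "\<forall>w. length w = k \<and> set w \<subseteq> S \<longrightarrow> prod_list w \<in> K"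
    using assms(1,2) unfolding nilpotent_modulo_def by blast
  have "prod_list w \<in> P" if "length w = m + k" "set w \<subseteq> S" for w
  proof -
    have "prod_list w = prod_list (take m w) * prod_list (drop m w)"
      by (metis append_take_drop_id prod_list.append)
    moreover have "set (take m w) \<subseteq> S" "set (drop m w) \<subseteq> S"
      using that(2) set_take_subset set_drop_subset by fastforce+
    ultimately show ?thesis
      using m k that(1) IK by simp
  qed
  then show ?thesis
    unfolding nilpotent_modulo_def by blast
qed

lemma prime_ideal_if_maximal_not_nilpotent_modulo:
  assumes P: "two_sided_ideal P" and not_nil: "\<not> nilpotent_modulo S P"
    and maximal: "\<And>I. two_sided_ideal I \<Longrightarrow> P \<subseteq> I \<Longrightarrow> \<not> nilpotent_modulo S I \<Longrightarrow> I = P"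
  shows "prime_ideal P"
proof -
  have enlarged: "nilpotent_modulo S (P + A)" if A: "two_sided_ideal A" "\<not> A \<subseteq> P" for A
  proof (rule ccontr)
    assume "\<not> nilpotent_modulo S (P + A)"
    moreover have "P \<subseteq> P + A" "A \<subseteq> P + A"
      using set_plus_intro[OF _ ideal_zero[OF A(1)]] set_plus_intro[OF ideal_zero[OF P]]
      by fastforce+
    ultimately have "P + A = P"
      using maximal two_sided_ideal_set_plus[OF P A(1)] by blast
    with \<open>A \<subseteq> P + A\<close> A(2) show False
      by blast
  qed
  have "P \<noteq> UNIV"
    using not_nil by (auto simp: nilpotent_modulo_def)
  moreover have "A \<subseteq> P \<or> B \<subseteq> P"
    if A: "two_sided_ideal A" and B: "two_sided_ideal B" and AB: "\<forall>a\<in>A. \<forall>b\<in>B. a * b \<in> P" for A B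
  proof (rule ccontr)
    assume "\<not> (A \<subseteq> P \<or> B \<subseteq> P)"
    then have "nilpotent_modulo S (P + A)" "nilpotent_modulo S (P + B)"
      using enlarged A B by blast+
    then have "nilpotent_modulo S P"
      by (rule nilpotent_modulo_mult) (rule set_plus_mult_in_ideal[OF P _ _ AB])
    with not_nil show False
      by blast
  qed
  ultimately show ?thesis
    using P unfolding prime_ideal_def by blast
qed

lemma prime_radical_locally_nilpotent:
  fixes S :: "'a::ring_1 set"
  assumes "finite S" and "S \<subseteq> prime_radical TYPE('a)"
  shows "nilpotent_modulo S {0}"
proof (rule ccontr)
  assume "\<not> nilpotent_modulo S {0}"
  define F where "F = {I. two_sided_ideal I \<and> \<not> nilpotent_modulo S I}"
  have "two_sided_ideal {0::'a}"
    by (simp add: two_sided_ideal_def)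
  with \<open>\<not> nilpotent_modulo S {0}\<close> have "F \<noteq> {}"
    by (auto simp: F_def)
  moreover have "\<Union>C \<in> F" if "C \<noteq> {}" "subset.chain F C" for C
  proof -
    have "subset.chain {I. two_sided_ideal I} C" "subset.chain {I. \<not> nilpotent_modulo S I} C"
      using that(2) by (auto simp: subset.chain_def F_def)
    then have "two_sided_ideal (\<Union>C)" "\<not> nilpotent_modulo S (\<Union>C)"
      using two_sided_ideal_Union_chain not_nilpotent_modulo_Union_chain assms(1) that(1) by blast+
    then show ?thesis
      by (simp add: F_def)
  qed
  ultimately obtain P where "P \<in> F" and maximal: "\<forall>I\<in>F. P \<subseteq> I \<longrightarrow> I = P"
    using subset_Zorn_nonempty[of F] by blast
  then have "prime_ideal P"
    by (intro prime_ideal_if_maximal_not_nilpotent_modulo) (auto simp: F_def)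
  with assms(2) have "S \<subseteq> P"
    by (auto simp: prime_radical_def)
  then have "nilpotent_modulo S P"
    unfolding nilpotent_modulo_def by (intro exI[of _ 1]) (auto simp: length_Suc_conv)
  with \<open>P \<in> F\<close> show False
    by (simp add: F_def)
qed

definition m2_ideal :: "'a::ring_1 set \<Rightarrow> 'a m2 set" where
  "m2_ideal I = {X. e11 X \<in> I \<and> e12 X \<in> I \<and> e21 X \<in> I \<and> e22 X \<in> I}"

lemmas m2_ops_defs = zero_m2_def one_m2_def plus_m2_def minus_m2_def uminus_m2_def times_m2_def

lemma two_sided_ideal_m2_ideal:
  assumes "two_sided_ideal I"
  shows "two_sided_ideal (m2_ideal I)"
  using assms unfolding two_sided_ideal_def m2_ideal_def
  by (simp add: m2_ops_defs ideal_add ideal_mult_left ideal_mult_right)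

inductive_set word_sums :: "'a::ring_1 set \<Rightarrow> nat \<Rightarrow> 'a set" for S k where
  zero: "0 \<in> word_sums S k"
| add: "x \<in> word_sums S k \<Longrightarrow> y \<in> word_sums S k \<Longrightarrow> x + y \<in> word_sums S k"
| word: "length w = k \<Longrightarrow> set w \<subseteq> S \<Longrightarrow> prod_list w \<in> word_sums S k"

lemma word_sums_mult_left:
  "x \<in> word_sums S k \<Longrightarrow> s \<in> S \<Longrightarrow> s * x \<in> word_sums S (Suc k)"
proof (induction x rule: word_sums.induct)
  case (word w)
  then have "prod_list (s # w) \<in> word_sums S (Suc k)"
    by (intro word_sums.word) auto
  then show ?case
    by simp
qed (simp_all add: distrib_left word_sums.zero word_sums.add)

definition m2_entries :: "'a m2 \<Rightarrow> 'a set" where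
  "m2_entries X = {e11 X, e12 X, e21 X, e22 X}"

lemma m2_power_entries_word_sums:
  fixes X :: "'a::ring_1 m2"
  shows "m2_entries (X ^ k) \<subseteq> word_sums (m2_entries X) k"
proof (induction k)
  case 0
  have "prod_list [] \<in> word_sums (m2_entries X) 0"
    by (rule word_sums.word) auto
  then show ?case
    by (simp add: m2_entries_def one_m2_def word_sums.zero)
next
  case (Suc k)
  have "e11 X \<in> m2_entries X" "e12 X \<in> m2_entries X" "e21 X \<in> m2_entries X" "e22 X \<in> m2_entries X"
    by (simp_all add: m2_entries_def)
  with Suc show ?case
    by (simp add: m2_entries_def times_m2_def word_sums.add word_sums_mult_left)
qed

lemma m2_nilpotent_if_entries_in_prime_radical:
  fixes X :: "'a::ring_1 m2"
  assumes "X \<in> m2_ideal (prime_radical TYPE('a))"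
  shows "nilpotent X"
proof -
  have "finite (m2_entries X)" "m2_entries X \<subseteq> prime_radical TYPE('a)"
    using assms by (simp_all add: m2_entries_def m2_ideal_def)
  then obtain n where n: "\<forall>w. length w = n \<and> set w \<subseteq> m2_entries X \<longrightarrow> prod_list w \<in> {0}"
    using prime_radical_locally_nilpotent unfolding nilpotent_modulo_def by blast
  have "x = 0" if "x \<in> word_sums (m2_entries X) n" for x
    using that n by (induction x rule: word_sums.induct) auto
  then have "X ^ n = 0"
    using m2_power_entries_word_sums[of X n] by (intro m2.expand) (auto simp: m2_entries_def zero_m2_def)
  then show ?thesis
    unfolding nilpotent_def by blast
qed

definition int_m2 :: "int \<Rightarrow> int \<Rightarrow> int \<Rightarrow> int \<Rightarrow> 'a::ring_1 m2" where
  "int_m2 a b c d = M2 (of_int a) (of_int b) (of_int c) (of_int d)"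

lemma of_nat_m2: "(of_nat n :: 'a::ring_1 m2) = M2 (of_nat n) 0 0 (of_nat n)"
  by (induction n) (simp_all add: zero_m2_def one_m2_def plus_m2_def)

lemma of_int_m2: "(of_int k :: 'a::ring_1 m2) = M2 (of_int k) 0 0 (of_int k)"
  by (cases k) (simp_all add: of_nat_m2 one_m2_def minus_m2_def uminus_m2_def)

lemma int_m2_square:
  "int_m2 a b c d * int_m2 a b c d = of_int (a + d) * int_m2 a b c d - (of_int (a * d - b * c) :: 'a::ring_1 m2)"
  by (simp add: int_m2_def of_int_m2 times_m2_def minus_m2_def algebra_simps flip: of_int_mult of_int_add of_int_diff)

lemma int_m2_mult_adjugate:
  "int_m2 a b c d * int_m2 d (- b) (- c) a = (of_int (a * d - b * c) :: 'a::ring_1 m2)"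
  by (simp add: int_m2_def of_int_m2 times_m2_def algebra_simps flip: of_int_mult of_int_add of_int_diff)

lemma int_m2_adjugate_mult:
  "int_m2 d (- b) (- c) a * int_m2 a b c d = (of_int (a * d - b * c) :: 'a::ring_1 m2)"
  by (simp add: int_m2_def of_int_m2 times_m2_def algebra_simps flip: of_int_mult of_int_add of_int_diff)

lemma of_int_in_m2_ideal:
  "two_sided_ideal I \<Longrightarrow> of_int k \<in> I \<Longrightarrow> (of_int k :: 'a::ring_1 m2) \<in> m2_ideal I"
  by (simp add: m2_ideal_def of_int_m2 ideal_zero)

lemma swnc_local_m2_residue:
  fixes A :: "'a::ring_1 m2"
  assumes "local_ring TYPE('a)" and "swnc_ring TYPE('a)"
  obtains a b c d where "A - int_m2 a b c d \<in> m2_ideal {x. nilpotent x}"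
proof -
  have "\<exists>k::int. nilpotent (x - of_int k)" for x :: 'a
    using swnc_local_residue[OF assms] by metis
  then obtain a b c d :: int where "nilpotent (e11 A - of_int a)" "nilpotent (e12 A - of_int b)"
      "nilpotent (e21 A - of_int c)" "nilpotent (e22 A - of_int d)"
    by metis
  then show ?thesis
    by (intro that[of a b c d]) (simp add: m2_ideal_def int_m2_def minus_m2_def)
qed

lemma two_primal_m2_ideal_nilpotent:
  fixes X :: "'a::ring_1 m2"
  assumes "two_primal TYPE('a)" and "X \<in> m2_ideal {x::'a. nilpotent x}"
  shows "nilpotent X"
  using m2_nilpotent_if_entries_in_prime_radical[of X] assms by (simp add: two_primal_def)

lemma swnc_elem_if_nilpotent: "nilpotent (a::'a::ring_1) \<Longrightarrow> swnc_elem a"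
  unfolding swnc_elem_def by (intro exI[of _ 0] exI[of _ a]) (simp add: idempotent_def)

lemma swnc_elem_if_nilpotent_square_minus:
  fixes a :: "'a::ring_1"
  assumes "nilpotent (a * a - a)"
  shows "swnc_elem a"
proof -
  obtain e where "idempotent e" "nilpotent (a - e)" "e * a = a * e"
    using idempotent_lift[OF assms] by blast
  moreover have "e * (a - e) = (a - e) * e"
    using \<open>e * a = a * e\<close> by (simp add: algebra_simps)
  ultimately show ?thesis
    unfolding swnc_elem_def by (intro exI[of _ e] exI[of _ "a - e"]) simp
qed

lemma swnc_elem_if_nilpotent_square_plus:
  fixes a :: "'a::ring_1"
  assumes "nilpotent (a * a + a)"
  shows "swnc_elem a"
proof -
  obtain e where "idempotent e" "nilpotent (- a - e)" "e * - a = - a * e"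
    using idempotent_lift[of "- a"] assms by auto
  moreover have "nilpotent (a + e)"
    using nilpotent_uminus[OF \<open>nilpotent (- a - e)\<close>] by (simp add: add.commute)
  moreover have "e * (a + e) = (a + e) * e"
    using \<open>e * - a = - a * e\<close> by (simp add: algebra_simps)
  ultimately show ?thesis
    unfolding swnc_elem_def by (intro exI[of _ e] exI[of _ "a + e"]) simp
qed

lemma m2_swnc_elem_if_det_nilpotent:
  fixes A :: "'a::ring_1 m2"
  assumes "two_primal TYPE('a)" and "local_ring TYPE('a)" and "swnc_ring TYPE('a)"
    and A: "A - int_m2 a b c d \<in> m2_ideal {x. nilpotent x}"
    and det: "nilpotent (of_int (a * d - b * c) :: 'a)"
  shows "swnc_elem A"
proof -
  let ?J = "m2_ideal {x::'a. nilpotent x}" and ?A\<^sub>0 = "int_m2 a b c d :: 'a m2"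
  have N: "two_sided_ideal {x::'a. nilpotent x}" and J: "two_sided_ideal ?J"
    using swnc_local_nilpotent_ideal[OF assms(2,3)] two_sided_ideal_m2_ideal by blast+
  obtain \<tau> :: int where \<tau>: "\<tau> \<in> {-1, 0, 1}" and trace: "nilpotent (of_int (a + d) - of_int \<tau> :: 'a)"
    using swnc_local_residue[OF assms(2,3)] .
  have "of_int \<tau> * A - of_int \<tau> * ?A\<^sub>0 \<in> ?J"
    using ideal_diff_mult[OF J _ A, of "of_int \<tau>" "of_int \<tau>"] ideal_zero[OF J] by simp
  moreover have "A * A - of_int \<tau> * A - (?A\<^sub>0 * ?A\<^sub>0 - of_int \<tau> * ?A\<^sub>0) =
      (A * A - ?A\<^sub>0 * ?A\<^sub>0) - (of_int \<tau> * A - of_int \<tau> * ?A\<^sub>0)"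
    by (simp add: algebra_simps)
  ultimately have "A * A - of_int \<tau> * A - (?A\<^sub>0 * ?A\<^sub>0 - of_int \<tau> * ?A\<^sub>0) \<in> ?J"
    using ideal_diff[OF J ideal_diff_mult[OF J A A]] by (simp only:)
  moreover have "?A\<^sub>0 * ?A\<^sub>0 - of_int \<tau> * ?A\<^sub>0 = of_int (a + d - \<tau>) * ?A\<^sub>0 - of_int (a * d - b * c)"
    by (simp add: int_m2_square algebra_simps)
  moreover have "of_int (a + d - \<tau>) * ?A\<^sub>0 - of_int (a * d - b * c) \<in> ?J"
    using trace det by (intro ideal_diff ideal_mult_right of_int_in_m2_ideal J N) auto
  ultimately have "A * A - of_int \<tau> * A \<in> ?J"
    using ideal_add[OF J] by fastforce
  then have "nilpotent (A * A - of_int \<tau> * A)"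
    using two_primal_m2_ideal_nilpotent[OF assms(1)] by blast
  with \<tau> show ?thesis
    by (auto intro: swnc_elem_if_nilpotent[OF nilpotent_if_nilpotent_square]
        swnc_elem_if_nilpotent_square_minus swnc_elem_if_nilpotent_square_plus)
qed

lemma m2_invertible_if_det_not_nilpotent:
  fixes A :: "'a::ring_1 m2"
  assumes "two_primal TYPE('a)" and "local_ring TYPE('a)" and "swnc_ring TYPE('a)"
    and A: "A - int_m2 a b c d \<in> m2_ideal {x. nilpotent x}"
    and det: "\<not> nilpotent (of_int (a * d - b * c) :: 'a)"
  shows "invertible A"
proof -
  let ?J = "m2_ideal {x::'a. nilpotent x}" and ?A\<^sub>0 = "int_m2 a b c d :: 'a m2"
  define D where "D = a * d - b * c"
  define B :: "'a m2" where "B = of_int D * int_m2 d (- b) (- c) a"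
  have N: "two_sided_ideal {x::'a. nilpotent x}" and J: "two_sided_ideal ?J"
    using swnc_local_nilpotent_ideal[OF assms(2,3)] two_sided_ideal_m2_ideal by blast+
  have "nilpotent (of_int (D * D - 1) :: 'a)"
    using swnc_local_square_minus_one[OF assms(2,3) det] by (simp add: D_def)
  then have D2: "(of_int (D * D - 1) :: 'a m2) \<in> ?J"
    by (rule of_int_in_m2_ideal[OF N, simplified])
  have "?A\<^sub>0 * int_m2 d (- b) (- c) a = of_int D" "int_m2 d (- b) (- c) a * ?A\<^sub>0 = of_int D"
    unfolding D_def by (rule int_m2_mult_adjugate int_m2_adjugate_mult)+
  then have "?A\<^sub>0 * B = of_int (D * D)" "B * ?A\<^sub>0 = of_int (D * D)"
    unfolding B_def of_int_mult
    by (simp_all only: mult.assoc[symmetric] mult_of_int_commute[of D ?A\<^sub>0, symmetric])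
      (simp_all only: mult.assoc)
  moreover have "A * B - ?A\<^sub>0 * B \<in> ?J" "B * A - B * ?A\<^sub>0 \<in> ?J"
    using ideal_diff_mult[OF J A, of B B] ideal_diff_mult[OF J _ A, of B B] ideal_zero[OF J] by simp_all
  ultimately have "A * B - 1 \<in> ?J" "B * A - 1 \<in> ?J"
    using ideal_add[OF J _ D2] by (fastforce simp: algebra_simps)+
  then have "invertible (1 + (A * B - 1))" "invertible (1 + (B * A - 1))"
    using invertible_one_plus_nilpotent two_primal_m2_ideal_nilpotent[OF assms(1)] by blast+
  then show ?thesis
    using invertible_if_mult_invertible by simp
qed

theorem theorem2p38:
  assumes "two_primal TYPE('a::ring_1)"
    and "local_ring TYPE('a)"
    and "swnc_ring TYPE('a)"
  shows "gswnc_ring TYPE('a m2)"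
  unfolding gswnc_ring_def
proof (intro allI impI)
  fix A :: "'a m2"
  assume "\<not> invertible A"
  obtain a b c d where A: "A - int_m2 a b c d \<in> m2_ideal {x. nilpotent x}"
    using swnc_local_m2_residue[OF assms(2,3)] .
  show "swnc_elem A"
  proof (cases "nilpotent (of_int (a * d - b * c) :: 'a)")
    case True
    then show ?thesis
      by (rule m2_swnc_elem_if_det_nilpotent[OF assms A])
  next
    case False
    then have "invertible A"
      by (rule m2_invertible_if_det_not_nilpotent[OF assms A])
    with \<open>\<not> invertible A\<close> show ?thesis
      by contradiction
  qed
qed

end
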